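(* Let $\mathbf k=\mathbb F_q$. For $a,b\ge0$ let $\mathfrak S(a,b)$ be the set of pairs $(J,L)$ of coprime nonzero homogeneous polynomials in $\mathbf k[X,Y]$ with $\deg J=a$, $\deg L=b$, let $\mathfrak T(a,b)\subseteq\mathfrak S(a,b)$ be the subset of pairs with $X\nmid J$, and let $\mathfrak t(a,b)=|\mathfrak T(a,b)|$. Then $$\mathfrak t(a,b)=\begin{cases}(q-1)(q^{b+1}-1),&a=0,\\(q-1)^2q^{a+b},&a\neq0.\end{cases}$$ Consequently $\mathfrak t(a,b)=\mathfrak t(a-k,b+k)$ for $1\le k\le a-1$. *)

theory Defs
  imports "HOL-Computational_Algebra.Polynomial_Factorial"
begin

text \<open>Bivariate polynomials k[X,Y] are represented as k[Y][X], i.e. as 'a poly poly: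
  the outer variable is X, the inner one is Y. The monomial X^i Y^j has coefficient
  coeff (coeff P i) j.\<close>

definition homog_of_deg :: "'a::zero poly poly \<Rightarrow> nat \<Rightarrow> bool" where
  "homog_of_deg P d \<longleftrightarrow> (\<forall>i j. coeff (coeff P i) j \<noteq> 0 \<longrightarrow> i + j = d)"

definition frakS :: "nat \<Rightarrow> nat \<Rightarrow> ('a::field poly poly \<times> 'a poly poly) set" where
  "frakS a b = {(J, L). J \<noteq> 0 \<and> L \<noteq> 0 \<and> homog_of_deg J a \<and> homog_of_deg L b
                       \<and> coprime J L}"

definition frakT :: "nat \<Rightarrow> nat \<Rightarrow> ('a::field poly poly \<times> 'a poly poly) set" where
  "frakT a b = {(J, L) \<in> frakS a b. \<not> ([:0, 1:] dvd J)}"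

definition frakt :: "'a::field itself \<Rightarrow> nat \<Rightarrow> nat \<Rightarrow> nat" where
  "frakt _ a b = card (frakT a b :: ('a poly poly \<times> 'a poly poly) set)"

end

theory Submission
  imports Defs "HOL-Library.Cardinality"
begin

text \<open>Dehomogenizing at \<open>X = 1\<close> identifies forms of degree \<open>d\<close> in \<open>k[X,Y]\<close> with
  polynomials of degree at most \<open>d\<close> in \<open>k[Y]\<close>. A form is not divisible by \<open>X\<close> iff its
  dehomogenization has degree exactly \<open>d\<close>, and for such forms the Bezout identity shows that
  coprimality is equivalent to coprimality of the dehomogenizations. So \<open>t(a, b)\<close> counts the
  coprime pairs \<open>(j, l)\<close> with \<open>deg j = a\<close> and \<open>l \<noteq> 0\<close>, \<open>deg l \<le> b\<close>. Splitting off the monic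
  gcd of an arbitrary such pair, coprime or not, gives
  \<open>(q - 1) q^a (q^(b+1) - 1) = (\<Sum>k\<le>min a b. q^k t(a - k, b - k))\<close>,
  and subtracting \<open>q\<close> times the same identity for \<open>(a - 1, b - 1)\<close> leaves \<open>t(a, b)\<close>.\<close>

section \<open>Homogenization\<close>

text \<open>\<open>homogenize d p\<close> is \<open>X\<^sup>d p(Y/X)\<close>, with \<open>X\<close> the outer variable;
  \<open>dehomogenize d\<close> sets \<open>X = 1\<close>.\<close>

definition homogenize :: "nat \<Rightarrow> 'a::comm_monoid_add poly \<Rightarrow> 'a poly poly" where
  "homogenize d p = (\<Sum>i\<le>d. monom (monom (coeff p i) i) (d - i))"

definition dehomogenize :: "nat \<Rightarrow> 'a::comm_monoid_add poly poly \<Rightarrow> 'a poly" where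
  "dehomogenize d P = (\<Sum>i\<le>d. monom (coeff (coeff P (d - i)) i) i)"

lemma coeff_coeff_homogenize:
  "coeff (coeff (homogenize d p) n) i = (if i + n = d then coeff p i else 0)"
  by (auto simp: homogenize_def coeff_sum if_distrib[of "\<lambda>P. coeff P i"] sum.If_cases)

lemma coeff_homogenize_0: "coeff (homogenize d p) 0 = monom (coeff p d) d"
  by (rule poly_eqI) (auto simp: coeff_coeff_homogenize)

lemma coeff_dehomogenize:
  "coeff (dehomogenize d P) i = (if i \<le> d then coeff (coeff P (d - i)) i else 0)"
  by (auto simp: dehomogenize_def coeff_sum)

lemma homog_of_deg_homogenize: "homog_of_deg (homogenize d p) d"
  by (simp add: homog_of_deg_def coeff_coeff_homogenize)

lemma dehomogenize_homogenize: "degree p \<le> d \<Longrightarrow> dehomogenize d (homogenize d p) = p"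
  by (rule poly_eqI) (auto simp: coeff_dehomogenize coeff_coeff_homogenize coeff_eq_0)

lemma homogenize_dehomogenize:
  assumes "homog_of_deg P d"
  shows "homogenize d (dehomogenize d P) = P"
proof (intro poly_eqI)
  fix n i
  show "coeff (coeff (homogenize d (dehomogenize d P)) n) i = coeff (coeff P n) i"
    using assms[unfolded homog_of_deg_def, rule_format, of n i]
    by (cases "coeff (coeff P n) i = 0") (auto simp: coeff_coeff_homogenize coeff_dehomogenize)
qed

lemma degree_dehomogenize_le: "degree (dehomogenize d P) \<le> d"
  by (rule degree_le) (simp add: coeff_dehomogenize)

lemma bij_betw_homogenize:
  "bij_betw (homogenize d) {p. degree p \<le> d} {P. homog_of_deg P d}"
  by (rule bij_betw_byWitness[where f' = "dehomogenize d"])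
     (auto simp: dehomogenize_homogenize homogenize_dehomogenize homog_of_deg_homogenize
        degree_dehomogenize_le)

lemma homogenize_0 [simp]: "homogenize d 0 = 0"
  by (simp add: homogenize_def)

lemma homogenize_eq_0_iff:
  assumes "degree p \<le> d"
  shows "homogenize d p = 0 \<longleftrightarrow> p = 0"
proof
  assume "homogenize d p = 0"
  then have "p = dehomogenize d 0" using dehomogenize_homogenize[OF assms] by simp
  then show "p = 0" by (simp add: dehomogenize_def)
qed simp

lemma homogenize_monom: "i \<le> d \<Longrightarrow> homogenize d (monom a i) = monom (monom a i) (d - i)"
  by (intro poly_eqI) (auto simp: coeff_coeff_homogenize)

lemma homogenize_add: "homogenize d (p + r) = homogenize d p + homogenize d r"
  by (intro poly_eqI) (simp add: coeff_coeff_homogenize)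

lemma homogenize_sum: "homogenize d (\<Sum>x\<in>A. f x) = (\<Sum>x\<in>A. homogenize d (f x))"
  by (intro poly_eqI) (auto simp: coeff_coeff_homogenize coeff_sum)

lemma homogenize_mult:
  fixes p r :: "'a::comm_semiring_1 poly"
  assumes "degree p \<le> m" "degree r \<le> n"
  shows "homogenize (m + n) (p * r) = homogenize m p * homogenize n r"
proof -
  have "p * r = (\<Sum>i\<le>m. monom (coeff p i) i) * (\<Sum>k\<le>n. monom (coeff r k) k)"
    by (simp only: poly_as_sum_of_monoms' assms)
  also have "\<dots> = (\<Sum>i\<le>m. \<Sum>k\<le>n. monom (coeff p i * coeff r k) (i + k))"
    by (simp add: sum_product mult_monom)
  finally have "homogenize (m + n) (p * r) =
      (\<Sum>i\<le>m. \<Sum>k\<le>n. monom (monom (coeff p i * coeff r k) (i + k)) (m + n - (i + k)))"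
    by (simp add: homogenize_sum homogenize_monom)
  also have "\<dots> = (\<Sum>i\<le>m. monom (monom (coeff p i) i) (m - i)) *
      (\<Sum>k\<le>n. monom (monom (coeff r k) k) (n - k))"
    by (auto simp: sum_product mult_monom intro!: sum.cong arg_cong2[where f = monom])
  finally show ?thesis by (simp add: homogenize_def)
qed

lemma homogenize_1: "homogenize d (1 :: 'a::comm_semiring_1 poly) = [:0, 1:] ^ d"
  using homogenize_monom[of 0 d "1 :: 'a"] by (simp add: monom_altdef flip: one_pCons)

lemma X_dvd_iff_coeff_0: "([:0, 1:] :: 'a::comm_ring_1 poly) dvd P \<longleftrightarrow> coeff P 0 = 0"
  using dvd_iff_poly_eq_0[of 0 P] by (simp add: poly_0_coeff_0)

lemma X_dvd_homogenize_iff: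
  "([:0, 1:] :: 'a::comm_ring_1 poly poly) dvd homogenize d p \<longleftrightarrow> coeff p d = 0"
  by (simp add: X_dvd_iff_coeff_0 coeff_homogenize_0)

section \<open>The Bezout identity and monic common factors\<close>

text \<open>For an arbitrary field \<open>'a\<close>, the type \<open>'a poly\<close> is not an instance of the gcd classes,
  so the Bezout identity is derived directly from division with remainder.\<close>

lemma euclidean_bezout:
  fixes a b :: "'a::euclidean_ring"
  shows "\<exists>d u v. d dvd a \<and> d dvd b \<and> u * a + v * b = d"
proof (induction "euclidean_size b" arbitrary: a b rule: less_induct)
  case less
  show ?case
  proof (cases "b = 0")
    case True
    then show ?thesis by (intro exI[of _ a] exI[of _ 1] exI[of _ 0]) simp
  next
    case False
    then have "euclidean_size (a mod b) < euclidean_size b" by (rule mod_size_less)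
    with less obtain d u v where d: "d dvd b" "d dvd a mod b" "u * b + v * (a mod b) = d"
      by blast
    have "d dvd a" using d(1,2) div_mult_mod_eq[of a b] by (metis dvd_add dvd_mult)
    moreover have "v * a + (u - v * (a div b)) * b = d"
      using d(3) by (simp add: algebra_simps flip: minus_div_mult_eq_mod)
    ultimately show ?thesis using d(1) by blast
  qed
qed

lemma coprime_imp_bezout:
  fixes a b :: "'a::euclidean_ring"
  assumes "coprime a b"
  obtains u v where "u * a + v * b = 1"
proof -
  obtain d u v where d: "d dvd a" "d dvd b" "u * a + v * b = d"
    using euclidean_bezout by blast
  then have "is_unit d" using assms by (intro coprime_common_divisor)
  then obtain w where "1 = d * w" by (rule dvdE)
  then have "w * (u * a + v * b) = 1" by (simp only: d(3) mult.commute[of w])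
  then have "(w * u) * a + (w * v) * b = 1" by (simp only: distrib_left mult.assoc)
  then show ?thesis by (rule that)
qed

lemma common_cofactors_coprime_imp_dvd:
  fixes m m' :: "'a::euclidean_ring"
  assumes "m * j = m' * j'" "m * l = m' * l'" "coprime j' l'"
  shows "m dvd m'"
proof -
  obtain u v where "u * j' + v * l' = 1" using assms(3) by (rule coprime_imp_bezout)
  then have "m' = u * (m' * j') + v * (m' * l')" by (metis distrib_left mult.left_commute mult_1_right)
  also have "\<dots> = u * (m * j) + v * (m * l)" by (simp only: assms(1,2))
  also have "\<dots> = m * (u * j + v * l)" by (simp add: algebra_simps)
  finally show ?thesis by (rule dvdI)
qed

lemma monic_dvd_antisym:
  fixes m m' :: "'a::idom poly"
  assumes "lead_coeff m = 1" "lead_coeff m' = 1" "m dvd m'" "m' dvd m"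
  shows "m = m'"
proof -
  obtain w where w: "m' = m * w" using assms(3) by (rule dvdE)
  have "m \<noteq> 0" "w \<noteq> 0" using assms(1,2) w by auto
  then have "degree m' = degree m + degree w" using w degree_mult_eq by blast
  moreover have "degree m' \<le> degree m" using assms(1,4) by (intro dvd_imp_degree_le) auto
  ultimately obtain c where "w = [:c:]" by (metis add_le_same_cancel1 le_zero_eq degree_eq_zeroE)
  moreover have "lead_coeff m' = lead_coeff m * lead_coeff w" using w by (simp only: lead_coeff_mult)
  with assms(1,2) \<open>w = [:c:]\<close> have "c = 1" by simp
  ultimately show ?thesis using w by simp
qed

lemma monic_coprime_factorization:
  fixes j l :: "'a::field poly"
  assumes "j \<noteq> 0"
  obtains m j' l' where "lead_coeff m = 1" "j = m * j'" "l = m * l'" "coprime j' l'"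
proof -
  obtain d u v where d: "d dvd j" "d dvd l" "u * j + v * l = d"
    using euclidean_bezout by blast
  have "d \<noteq> 0" using assms d(1) by auto
  define m where "m = smult (inverse (lead_coeff d)) d"
  have m: "lead_coeff m = 1" unfolding m_def using \<open>d \<noteq> 0\<close> by simp
  then have "m \<noteq> 0" by auto
  have md: "m dvd d" unfolding m_def by (rule smult_dvd) (simp_all add: \<open>d \<noteq> 0\<close>)
  have "d dvd m" unfolding m_def by (rule dvd_smult) simp
  from dvd_trans[OF md d(1)] obtain j' where j': "j = m * j'" by (rule dvdE)
  from dvd_trans[OF md d(2)] obtain l' where l': "l = m * l'" by (rule dvdE)
  have "coprime j' l'"
  proof (rule coprimeI)
    fix c assume "c dvd j'" "c dvd l'"
    then have "m * c dvd j" "m * c dvd l" unfolding j' l' by (simp_all add: mult_dvd_mono)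
    then have "m * c dvd d" unfolding d(3)[symmetric] by (simp add: dvd_add dvd_mult)
    with \<open>d dvd m\<close> have "m * c dvd m * 1" by (metis dvd_trans mult_1_right)
    with \<open>m \<noteq> 0\<close> show "is_unit c" by simp
  qed
  with m j' l' show ?thesis by (rule that)
qed

lemma monic_coprime_factorization_unique:
  fixes m m' :: "'a::field poly"
  assumes "lead_coeff m = 1" "lead_coeff m' = 1" "m * j = m' * j'" "m * l = m' * l'"
    "coprime j l" "coprime j' l'"
  shows "m = m'"
  by (rule monic_dvd_antisym[OF assms(1,2)]
      common_cofactors_coprime_imp_dvd[OF assms(3,4,6)]
      common_cofactors_coprime_imp_dvd[OF assms(3,4)[symmetric] assms(5)])+

lemma X_dvd_mult_iff:
  "([:0, 1:] :: 'a::idom poly) dvd P * Q \<longleftrightarrow> [:0, 1:] dvd P \<or> [:0, 1:] dvd Q"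
  by (simp add: X_dvd_iff_coeff_0 coeff_mult_0)

lemma dvd_X_power_imp_unit:
  fixes D :: "'a::idom_divide poly"
  assumes "D dvd [:0, 1:] ^ N" "\<not> [:0, 1:] dvd D"
  shows "is_unit D"
  using assms(1)
proof (induction N)
  case (Suc N)
  from Suc.prems obtain E where E: "[:0, 1:] ^ Suc N = D * E" by (rule dvdE)
  have "[:0, 1:] dvd D * E" unfolding E[symmetric] by (simp only: power_Suc dvd_triv_left)
  with assms(2) have "[:0, 1:] dvd E" by (simp add: X_dvd_mult_iff)
  then obtain E' where "E = [:0, 1:] * E'" by (rule dvdE)
  with E have "[:0, 1:] ^ N = D * E'" by (simp add: mult.left_commute)
  then show ?case by (intro Suc.IH) simp
qed simp

lemma coprime_X_power_if_not_X_dvd: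
  fixes P :: "'a::idom_divide poly"
  assumes "\<not> [:0, 1:] dvd P"
  shows "coprime P ([:0, 1:] ^ N)"
proof (rule coprimeI)
  fix c assume "c dvd P" "c dvd [:0, 1:] ^ N"
  with assms show "is_unit c" by (meson dvd_X_power_imp_unit dvd_trans)
qed

lemma is_unit_homogenize_imp_degree_0:
  fixes c :: "'a::field poly"
  assumes "c \<noteq> 0" "is_unit (homogenize (degree c) c)"
  shows "degree c = 0"
proof -
  obtain e where e: "homogenize (degree c) c = [:e:]" "is_unit e"
    using assms(2) is_unit_poly_iff by blast
  have "e = monom (lead_coeff c) (degree c)"
    using arg_cong[OF e(1), of "\<lambda>P. coeff P 0"] by (simp add: coeff_homogenize_0)
  with e(2) assms(1) show ?thesis by (simp add: is_unit_iff_degree degree_monom_eq)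
qed

lemma coprime_homogenize_iff:
  fixes j l :: "'a::field poly"
  assumes "j \<noteq> 0" "degree j = a" "l \<noteq> 0" "degree l \<le> b"
  shows "coprime (homogenize a j) (homogenize b l) \<longleftrightarrow> coprime j l"
proof
  assume "coprime j l"
  then obtain u v where uv: "u * j + v * l = 1" by (rule coprime_imp_bezout)
  define N where "N = degree u + degree v + a + b"
  txt \<open>A common divisor of the two forms divides \<open>X\<^sup>N\<close>, the homogenization of \<open>u j + v l = 1\<close>,
    which is coprime to \<open>homogenize a j\<close> because \<open>X\<close> does not divide the latter.\<close>
  have "[:0, 1:] ^ N = homogenize N (u * j + v * l)"
    by (simp add: uv homogenize_1)
  also have "\<dots> = homogenize (N - a) u * homogenize a j + homogenize (N - b) v * homogenize b l"
    using homogenize_mult[of u "N - a" j a] homogenize_mult[of v "N - b" l b] assms(2,4)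
    by (simp add: N_def homogenize_add add_ac)
  finally have X_power: "[:0, 1:] ^ N = \<dots>" .
  have coprime_X_power: "coprime (homogenize a j) ([:0, 1:] ^ N)"
    using assms(1) by (intro coprime_X_power_if_not_X_dvd) (simp add: X_dvd_homogenize_iff flip: assms(2))
  show "coprime (homogenize a j) (homogenize b l)"
  proof (rule coprimeI)
    fix D assume D: "D dvd homogenize a j" "D dvd homogenize b l"
    then have "D dvd [:0, 1:] ^ N" unfolding X_power by (intro dvd_add dvd_mult)
    with coprime_X_power D(1) show "is_unit D" by (rule coprime_common_divisor)
  qed
next
  assume coprime_hom: "coprime (homogenize a j) (homogenize b l)"
  show "coprime j l"
  proof (rule coprimeI)
    fix c assume "c dvd j" "c dvd l"
    then obtain g g' where g: "j = c * g" and g': "l = c * g'" by (elim dvdE)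
    have "c \<noteq> 0" "g \<noteq> 0" "g' \<noteq> 0" using g g' assms(1,3) by auto
    then have dj: "degree c + degree g = a" and dl: "degree c + (b - degree c) = b"
      "degree g' \<le> b - degree c"
      using g g' assms(2,4) by (auto simp: degree_mult_eq)
    have "homogenize (degree c) c dvd homogenize a j"
      unfolding g dj[symmetric] by (simp add: homogenize_mult)
    moreover have "homogenize (degree c) c dvd homogenize b l"
      unfolding g' using homogenize_mult[OF order.refl dl(2), of c] by (simp add: dl(1))
    ultimately have "is_unit (homogenize (degree c) c)"
      using coprime_hom coprime_common_divisor by blast
    with \<open>c \<noteq> 0\<close> have "degree c = 0" by (rule is_unit_homogenize_imp_degree_0)
    with \<open>c \<noteq> 0\<close> show "is_unit c" by (simp add: is_unit_iff_degree)
  qed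
qed

section \<open>Reduction to pairs of univariate polynomials\<close>

definition poly_pairs :: "nat \<Rightarrow> nat \<Rightarrow> ('a::zero poly \<times> 'a poly) set" where
  "poly_pairs a b = {j. j \<noteq> 0 \<and> degree j = a} \<times> {l. l \<noteq> 0 \<and> degree l \<le> b}"

definition coprime_pairs :: "nat \<Rightarrow> nat \<Rightarrow> ('a::field poly \<times> 'a poly) set" where
  "coprime_pairs a b = {(j, l) \<in> poly_pairs a b. coprime j l}"

lemma frakT_eq_image_coprime_pairs:
  "frakT a b = map_prod (homogenize a) (homogenize b) ` coprime_pairs a b"
proof (intro equalityI subsetI)
  fix x assume "x \<in> frakT a b"
  then obtain J L where x: "x = (J, L)" and JL: "J \<noteq> 0" "L \<noteq> 0" "homog_of_deg J a"
    "homog_of_deg L b" "coprime J L" "\<not> [:0, 1:] dvd J"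
    unfolding frakT_def frakS_def by auto
  define j l where "j = dehomogenize a J" and "l = dehomogenize b L"
  have jl: "J = homogenize a j" "degree j \<le> a" "L = homogenize b l" "degree l \<le> b"
    using JL(3,4) by (simp_all add: j_def l_def homogenize_dehomogenize degree_dehomogenize_le)
  have "j \<noteq> 0" "l \<noteq> 0" using JL(1,2) jl by auto
  have "coeff j a \<noteq> 0" using JL(6) by (simp add: jl(1) X_dvd_homogenize_iff)
  then have "degree j = a" using jl(2) le_degree by (metis antisym)
  with JL(5) jl \<open>j \<noteq> 0\<close> \<open>l \<noteq> 0\<close> have "(j, l) \<in> coprime_pairs a b"
    by (simp add: coprime_pairs_def poly_pairs_def coprime_homogenize_iff)
  then show "x \<in> map_prod (homogenize a) (homogenize b) ` coprime_pairs a b"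
    unfolding x jl(1,3) by (rule rev_image_eqI) simp
next
  fix x assume "x \<in> map_prod (homogenize a) (homogenize b) ` coprime_pairs a b"
  then obtain j l where x: "x = (homogenize a j, homogenize b l)"
    and jl: "j \<noteq> 0" "degree j = a" "l \<noteq> 0" "degree l \<le> b" "coprime j l"
    unfolding coprime_pairs_def poly_pairs_def by auto
  have "homogenize a j \<noteq> 0" "homogenize b l \<noteq> 0" using jl by (simp_all add: homogenize_eq_0_iff)
  moreover have "coprime (homogenize a j) (homogenize b l)" using jl by (simp add: coprime_homogenize_iff)
  moreover have "\<not> [:0, 1:] dvd homogenize a j"
    using jl(1) by (simp add: X_dvd_homogenize_iff flip: jl(2))
  ultimately show "x \<in> frakT a b" by (simp add: x frakT_def frakS_def homog_of_deg_homogenize)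
qed

lemma card_frakT:
  "card (frakT a b :: ('a::field poly poly \<times> 'a poly poly) set) =
     card (coprime_pairs a b :: ('a poly \<times> 'a poly) set)"
proof -
  have "inj_on (map_prod (homogenize a) (homogenize b)) ({j. degree j \<le> a} \<times> {l. degree l \<le> b})"
    by (intro map_prod_inj_on bij_betw_imp_inj_on[OF bij_betw_homogenize])
  moreover have "coprime_pairs a b \<subseteq> {j. degree j \<le> a} \<times> {l. degree l \<le> b}"
    by (auto simp: coprime_pairs_def poly_pairs_def)
  ultimately have "inj_on (map_prod (homogenize a) (homogenize b)) (coprime_pairs a b)"
    by (rule inj_on_subset)
  then show ?thesis unfolding frakT_eq_image_coprime_pairs by (rule card_image)
qed

section \<open>Counting polynomials over a finite field\<close>

lemma card_degree_le_coeff_in: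
  "card {p :: 'a::{zero,finite} poly. degree p \<le> n \<and> coeff p n \<in> C} = card C * CARD('a) ^ n"
proof (induction n)
  case 0
  have "{p :: 'a poly. degree p \<le> 0 \<and> coeff p 0 \<in> C} = (\<lambda>c. [:c:]) ` C"
    by (auto elim: degree_eq_zeroE)
  then show ?case by (simp add: card_image inj_on_def)
next
  case (Suc n)
  have "{p :: 'a poly. degree p \<le> Suc n \<and> coeff p (Suc n) \<in> C} =
      case_prod pCons ` (UNIV \<times> {p. degree p \<le> n \<and> coeff p n \<in> C})"
  proof (intro equalityI subsetI)
    fix p :: "'a poly" assume "p \<in> {p. degree p \<le> Suc n \<and> coeff p (Suc n) \<in> C}"
    moreover obtain c q where "p = pCons c q" by (rule pCons_cases)
    ultimately show "p \<in> case_prod pCons ` (UNIV \<times> {p. degree p \<le> n \<and> coeff p n \<in> C})"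
      by (auto simp: degree_pCons_eq_if split: if_splits)
  qed (auto simp: degree_pCons_eq_if)
  moreover have "inj (case_prod (pCons :: 'a \<Rightarrow> _))" by (auto simp: inj_on_def)
  ultimately show ?case
    using Suc.IH by (simp add: card_image inj_on_subset card_cartesian_product)
qed

lemma card_degree_le: "card {p :: 'a::{zero,finite} poly. degree p \<le> n} = CARD('a) ^ Suc n"
  using card_degree_le_coeff_in[of n "UNIV :: 'a set"] by simp

lemma finite_degree_le: "finite {p :: 'a::{zero,finite} poly. degree p \<le> n}"
  by (rule card_ge_0_finite) (simp add: card_degree_le)

lemma card_nonzero_degree_eq:
  "card {p :: 'a::{zero,finite} poly. p \<noteq> 0 \<and> degree p = n} = (CARD('a) - 1) * CARD('a) ^ n"
proof -
  have "{p :: 'a poly. p \<noteq> 0 \<and> degree p = n} = {p. degree p \<le> n \<and> coeff p n \<in> - {0}}"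
    by (auto simp: le_antisym le_degree)
  then show ?thesis using card_degree_le_coeff_in[of n "- {0} :: 'a set"]
    by (simp add: Compl_eq_Diff_UNIV card_Diff_singleton)
qed

lemma card_monic_degree_eq:
  "card {p :: 'a::{zero_neq_one,finite} poly. lead_coeff p = 1 \<and> degree p = n} = CARD('a) ^ n"
proof -
  have "degree p = n" if "degree p \<le> n" "coeff p n = 1" for p :: "'a poly"
    using that le_degree[of p n] by simp
  then have "{p :: 'a poly. lead_coeff p = 1 \<and> degree p = n} = {p. degree p \<le> n \<and> coeff p n \<in> {1}}"
    by auto
  then show ?thesis using card_degree_le_coeff_in[of n "{1} :: 'a set"] by simp
qed

lemma card_nonzero_degree_le:
  "card {p :: 'a::{zero,finite} poly. p \<noteq> 0 \<and> degree p \<le> n} = CARD('a) ^ Suc n - 1"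
proof -
  have "{p :: 'a poly. p \<noteq> 0 \<and> degree p \<le> n} = {p. degree p \<le> n} - {0}" by auto
  then show ?thesis by (simp add: card_Diff_singleton finite_degree_le card_degree_le)
qed

lemma card_poly_pairs:
  "card (poly_pairs a b :: ('a::{zero,finite} poly \<times> 'a poly) set) =
     (CARD('a) - 1) * CARD('a) ^ a * (CARD('a) ^ Suc b - 1)"
  by (simp add: poly_pairs_def card_cartesian_product card_nonzero_degree_eq card_nonzero_degree_le)

section \<open>Splitting off the monic gcd\<close>

definition monic_polys :: "nat \<Rightarrow> 'a::zero_neq_one poly set" where
  "monic_polys k = {p. lead_coeff p = 1 \<and> degree p = k}"

lemma bij_betw_monic_times_coprime_pairs:
  "bij_betw (\<lambda>(k, m, j, l). (m * j, m * l))
     (SIGMA k:{..min a b}. monic_polys k \<times> coprime_pairs (a - k) (b - k))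
     (poly_pairs a b :: ('a::field poly \<times> 'a poly) set)"
  (is "bij_betw ?f ?A ?B")
proof (rule bij_betwI')
  fix x y assume "x \<in> ?A" "y \<in> ?A"
  obtain k m j l k' m' j' l' where x: "x = (k, m, j, l)" and y: "y = (k', m', j', l')"
    by (metis prod_cases4)
  have m: "lead_coeff m = 1" "degree m = k" "lead_coeff m' = 1" "degree m' = k'"
    and "coprime j l" "coprime j' l'"
    using \<open>x \<in> ?A\<close> \<open>y \<in> ?A\<close> by (auto simp: x y monic_polys_def coprime_pairs_def)
  show "(?f x = ?f y) = (x = y)"
  proof
    assume eq: "?f x = ?f y"
    then have "m * j = m' * j'" "m * l = m' * l'" by (simp_all add: x y)
    then have "m = m'"
      using monic_coprime_factorization_unique m(1,3) \<open>coprime j l\<close> \<open>coprime j' l'\<close> by blast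
    moreover have "m \<noteq> 0" using m by auto
    ultimately show "x = y" using eq m by (auto simp: x y)
  qed simp
next
  fix x assume "x \<in> ?A"
  then obtain m j l where x: "x = (degree m, m, j, l)" and "lead_coeff m = 1" "degree m \<le> min a b"
    "j \<noteq> 0" "degree j = a - degree m" "l \<noteq> 0" "degree l \<le> b - degree m"
    by (auto simp: monic_polys_def coprime_pairs_def poly_pairs_def)
  moreover from this have "m \<noteq> 0" by auto
  ultimately show "?f x \<in> ?B" by (auto simp: poly_pairs_def degree_mult_eq)
next
  fix y assume "y \<in> ?B"
  then obtain j l where y: "y = (j, l)" and jl: "j \<noteq> 0" "degree j = a" "l \<noteq> 0" "degree l \<le> b"
    unfolding poly_pairs_def by auto
  obtain m j' l' where m: "lead_coeff m = 1" "j = m * j'" "l = m * l'" "coprime j' l'"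
    using monic_coprime_factorization[OF jl(1)] by blast
  have "m \<noteq> 0" "j' \<noteq> 0" "l' \<noteq> 0" using m jl by auto
  then have "degree m + degree j' = a" "degree m + degree l' \<le> b"
    using m(2,3) jl(2,4) by (auto simp: degree_mult_eq)
  with m \<open>j' \<noteq> 0\<close> \<open>l' \<noteq> 0\<close>
  have "(degree m, m, j', l') \<in> ?A"
    by (auto simp: monic_polys_def coprime_pairs_def poly_pairs_def)
  moreover have "y = ?f (degree m, m, j', l')" using y m by simp
  ultimately show "\<exists>x \<in> ?A. y = ?f x" by blast
qed

lemma finite_coprime_pairs: "finite (coprime_pairs a b :: ('a::{field,finite} poly \<times> 'a poly) set)"
proof (rule finite_subset)
  show "coprime_pairs a b \<subseteq> {j :: 'a poly. degree j \<le> a} \<times> {l. degree l \<le> b}"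
    by (auto simp: coprime_pairs_def poly_pairs_def)
qed (simp add: finite_degree_le)

lemma finite_monic_polys: "finite (monic_polys k :: 'a::{zero_neq_one,finite} poly set)"
  by (rule finite_subset[OF _ finite_degree_le[of k]]) (auto simp: monic_polys_def)

lemma card_poly_pairs_eq_sum:
  "card (poly_pairs a b :: ('a::{field,finite} poly \<times> 'a poly) set) =
     (\<Sum>k\<le>min a b. CARD('a) ^ k * card (coprime_pairs (a - k) (b - k) :: ('a poly \<times> 'a poly) set))"
proof -
  let ?C = "\<lambda>k. coprime_pairs (a - k) (b - k) :: ('a poly \<times> 'a poly) set"
  have "card (poly_pairs a b :: ('a poly \<times> 'a poly) set) =
      card (SIGMA k:{..min a b}. (monic_polys k :: 'a poly set) \<times> ?C k)"
    by (rule bij_betw_same_card[OF bij_betw_monic_times_coprime_pairs, symmetric])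
  also have "\<dots> = (\<Sum>k\<le>min a b. card (monic_polys k :: 'a poly set) * card (?C k))"
    by (simp add: finite_monic_polys finite_coprime_pairs card_cartesian_product)
  finally show ?thesis by (simp add: monic_polys_def card_monic_degree_eq)
qed

lemma coprime_pairs_0: "coprime_pairs 0 b = poly_pairs 0 b"
  by (auto simp: coprime_pairs_def poly_pairs_def is_unit_iff_degree intro: is_unit_left_imp_coprime)

lemma card_coprime_pairs_0:
  "card (coprime_pairs 0 b :: ('a::{field,finite} poly \<times> 'a poly) set) =
     (CARD('a) - 1) * (CARD('a) ^ Suc b - 1)"
  by (simp add: coprime_pairs_0 card_poly_pairs)

lemma card_coprime_pairs:
  assumes "a \<noteq> 0"
  shows "card (coprime_pairs a b :: ('a::{field,finite} poly \<times> 'a poly) set) =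
           (CARD('a) - 1)^2 * CARD('a) ^ (a + b)"
proof -
  define q where "q = CARD('a)"
  define t where "t m n = card (coprime_pairs m n :: ('a poly \<times> 'a poly) set)" for m n
  define P where "P m n = (q - 1) * q ^ m * (q ^ Suc n - 1)" for m n
  have "q \<ge> 1" by (simp add: q_def Suc_le_eq finite_UNIV_card_ge_0)
  have P_sum: "P m n = (\<Sum>k\<le>min m n. q ^ k * t (m - k) (n - k))" for m n
    using card_poly_pairs_eq_sum[where 'a='a, of m n] card_poly_pairs[where 'a='a, of m n]
    by (simp add: P_def t_def q_def)
  have int_P: "int (P m n) = (int q - 1) * int q ^ m * (int q ^ Suc n - 1)" for m n
    using \<open>q \<ge> 1\<close> by (simp add: P_def of_nat_diff)
  show ?thesis
  proof (cases b)
    case 0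
    then show ?thesis using P_sum[of a 0] by (simp add: P_def t_def q_def power2_eq_square mult_ac)
  next
    case (Suc b')
    txt \<open>Comparing the sums for \<open>(a, b)\<close> and \<open>(a - 1, b - 1)\<close> isolates the term \<open>k = 0\<close>.\<close>
    obtain a' where a: "a = Suc a'" using assms by (cases a) auto
    have "P a b = t a b + (\<Sum>k\<le>min a' b'. q ^ Suc k * t (a' - k) (b' - k))"
      using P_sum[of a b] by (simp add: a Suc sum.atMost_Suc_shift del: sum.atMost_Suc)
    also have "(\<Sum>k\<le>min a' b'. q ^ Suc k * t (a' - k) (b' - k)) = q * P a' b'"
      by (simp add: P_sum sum_distrib_left mult.assoc)
    finally have "int (t a b) = int (P a b) - int q * int (P a' b')" by simp
    also have "\<dots> = (int q - 1)^2 * int q ^ (a + b)"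
      by (simp add: int_P a Suc algebra_simps power2_eq_square power_add)
    also have "\<dots> = int ((q - 1)^2 * q ^ (a + b))" using \<open>q \<ge> 1\<close> by (simp add: of_nat_diff)
    finally show ?thesis unfolding t_def q_def by (simp only: of_nat_eq_iff)
  qed
qed

theorem mainTheorem7:
  fixes q :: nat and T :: "'a::{field,finite} itself"
  assumes "card (UNIV :: 'a set) = q"
  shows "frakt T a b =
           (if a = 0 then (q - 1) * (q ^ (b + 1) - 1) else (q - 1)^2 * q ^ (a + b))
         \<and> (\<forall>k. 1 \<le> k \<and> k \<le> a - 1 \<longrightarrow> frakt T a b = frakt T (a - k) (b + k))"
proof -
  have frakt_formula: "frakt T m n = (if m = 0 then (q - 1) * (q ^ (n + 1) - 1) else (q - 1)^2 * q ^ (m + n))"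
    for m n
    using assms by (simp add: frakt_def card_frakT card_coprime_pairs_0 card_coprime_pairs)
  then show ?thesis by simp
qed

end
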